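(* Consider the CDM model and a boundary or trivial equilibrium $\bm{\hat{y}}$ of its age-structured map, with adult part $\bm{\hat{x}}$ such that $\hat x_i=0$ for $i\in Z$ (a nonempty subset of $\mathcal{M}$) and $\hat x_i>0$ for $i\in\mathcal{M}\setminus Z$. Assume the principal submatrix $\bm{J}^\bullet$ of the Jacobian of the map at $\bm{\hat{y}}$ indexed by all age classes of the species in $\mathcal{M}\setminus Z$ satisfies $\rho(\bm{J}^\bullet)<1$ (e.g. guaranteed by Proposition 1's condition for the subsystem; vacuous if $Z=\mathcal{M}$). If $$\frac{\tilde\lambda_i-z_i}{z_i} < q_i^{-1}\sum_{k\in\mathcal{M}\setminus Z}A_{ik}\hat{x}_k\quad\text{for all } i\in Z$$ (the empty sum being $0$ in the trivial case $Z=\mathcal{M}$), then the Jacobian of the map at $\bm{\hat{y}}$ has spectral radius less than $1$, i.e. $\bm{\hat{y}}$ is locally asymptotically stable.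
   Context: CDM model: $m\ge1$ species $\mathcal{M}=\{1,\dots,m\}$, delays $\delta_i\in\{0,1,\dots\}$, survival probabilities $\sigma_{a\mid i}\in(0,1]$ ($a<\delta_i$), adult survival $\sigma_{\delta_i\mid i}\in(0,1)$, $z_i=1-\sigma_{\delta_i\mid i}$, fecundity $\lambda_i>0$, $\tilde\lambda_i=\lambda_i\prod_{a=0}^{\delta_i-1}\sigma_{a\mid i}$ (empty product $=1$), $\bm{A}\ge\bm{0}$ with positive diagonal, $\bm{q}>\bm{0}$. Per capita growth $G_i(\bm{x})=\lambda_i/(1+q_i^{-1}\sum_kA_{ik}x_k)$. Age-structured map $h$ on $\bm{y}=(y_{a\mid i})$, $0\le a\le\delta_i$, with adults $\bm{x}=(y_{\delta_1\mid1},\dots,y_{\delta_m\mid m})^\top$: if $\delta_i>0$, $h_{0\mid i}(\bm{y})=G_i(\bm{x})y_{\delta_i\mid i}$, $h_{a\mid i}(\bm{y})=\sigma_{a-1\mid i}y_{a-1\mid i}$ ($1\le a\le\delta_i-1$), $h_{\delta_i\mid i}(\bm{y})=\sigma_{\delta_i-1\mid i}y_{\delta_i-1\mid i}+\sigma_{\delta_i\mid i}y_{\delta_i\mid i}$; if $\delta_i=0$, $h_{0\mid i}(\bm{y})=\sigma_{0\mid i}y_{0\mid i}+G_i(\bm{x})y_{0\mid i}$. $\rho$ denotes spectral radius. *)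

theory Defs
  imports Complex_Main "Jordan_Normal_Form.Spectral_Radius"
begin

text \<open>Species are indexed by 0..<m (paper: 1..m).
  A state y assigns to every age/species index (a,i) (with i < m, a \<le> \<delta> i)
  the density y_{a|i}; values outside this index set are irrelevant.
  Parameters: sig a i = \<sigma>_{a|i}, lam i = \<lambda>_i, A i k = A_{ik}, q i = q_i.\<close>

definition cdm_G :: "nat \<Rightarrow> (nat \<Rightarrow> real) \<Rightarrow> (nat \<Rightarrow> nat \<Rightarrow> real) \<Rightarrow> (nat \<Rightarrow> real)
    \<Rightarrow> nat \<Rightarrow> (nat \<Rightarrow> real) \<Rightarrow> real" where
  "cdm_G m lam A q i x = lam i / (1 + (\<Sum>k<m. A i k * x k) / q i)"

definition cdm_adults :: "(nat \<Rightarrow> nat) \<Rightarrow> (nat \<times> nat \<Rightarrow> real) \<Rightarrow> nat \<Rightarrow> real" where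
  "cdm_adults \<delta> y = (\<lambda>k. y (\<delta> k, k))"

definition cdm_h :: "nat \<Rightarrow> (nat \<Rightarrow> nat) \<Rightarrow> (nat \<Rightarrow> nat \<Rightarrow> real) \<Rightarrow> (nat \<Rightarrow> real)
    \<Rightarrow> (nat \<Rightarrow> nat \<Rightarrow> real) \<Rightarrow> (nat \<Rightarrow> real) \<Rightarrow> (nat \<times> nat \<Rightarrow> real) \<Rightarrow> nat \<times> nat \<Rightarrow> real" where
  "cdm_h m \<delta> sig lam A q y = (\<lambda>(a, i).
     (let G = cdm_G m lam A q i (cdm_adults \<delta> y) in
      if \<delta> i = 0 then
        (if a = 0 then sig 0 i * y (0, i) + G * y (0, i) else 0)
      else if a = 0 then G * y (\<delta> i, i)
      else if a < \<delta> i then sig (a - 1) i * y (a - 1, i)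
      else if a = \<delta> i then sig (a - 1) i * y (a - 1, i) + sig (\<delta> i) i * y (\<delta> i, i)
      else 0))"

definition deriv0 :: "(real \<Rightarrow> real) \<Rightarrow> real" where
  "deriv0 f = (SOME D. DERIV f 0 :> D)"

definition cdm_jac :: "nat \<Rightarrow> (nat \<Rightarrow> nat) \<Rightarrow> (nat \<Rightarrow> nat \<Rightarrow> real) \<Rightarrow> (nat \<Rightarrow> real)
    \<Rightarrow> (nat \<Rightarrow> nat \<Rightarrow> real) \<Rightarrow> (nat \<Rightarrow> real) \<Rightarrow> (nat \<times> nat \<Rightarrow> real)
    \<Rightarrow> nat \<times> nat \<Rightarrow> nat \<times> nat \<Rightarrow> real" where
  "cdm_jac m \<delta> sig lam A q y r c =
     deriv0 (\<lambda>t. cdm_h m \<delta> sig lam A q (y(c := y c + t)) r)"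

definition cdm_idx :: "nat \<Rightarrow> (nat \<Rightarrow> nat) \<Rightarrow> nat set \<Rightarrow> (nat \<times> nat) list" where
  "cdm_idx m \<delta> S = concat (map (\<lambda>i. map (\<lambda>a. (a, i)) [0..<Suc (\<delta> i)]) (filter (\<lambda>i. i \<in> S) [0..<m]))"

definition cdm_jac_mat :: "nat \<Rightarrow> (nat \<Rightarrow> nat) \<Rightarrow> (nat \<Rightarrow> nat \<Rightarrow> real) \<Rightarrow> (nat \<Rightarrow> real)
    \<Rightarrow> (nat \<Rightarrow> nat \<Rightarrow> real) \<Rightarrow> (nat \<Rightarrow> real) \<Rightarrow> (nat \<times> nat \<Rightarrow> real) \<Rightarrow> nat set \<Rightarrow> complex mat" where
  "cdm_jac_mat m \<delta> sig lam A q y S =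
     (let ix = cdm_idx m \<delta> S in
      mat (length ix) (length ix)
        (\<lambda>(r, c). complex_of_real (cdm_jac m \<delta> sig lam A q y (ix ! r) (ix ! c))))"

end

theory Submission
  imports Defs
begin

text \<open>Take an eigenvalue \<mu> of the Jacobian of maximal modulus and an eigenvector u for it.
  The adults of every extinct species i \<in> Z have density 0, so the derivative of the
  density-dependent fecundity drops out of the rows of species i: these rows only involve the
  age classes of i and form a Leslie matrix with fecundity G = \<lambda> / (1 + \<Sum>k. A i k x k / q i),
  juvenile survival on the subdiagonal and adult survival \<sigma> on the diagonal.
  If u charges some extinct species, its restriction is an eigenvector of that Leslie block,
  whose characteristic equation \<mu>^\<delta> (\<mu> - \<sigma>) = G \<Prod>(juvenile survival) has no root of
  modulus \<ge> 1 once G \<Prod>(juvenile survival) + \<sigma> < 1, which is what the failure of the invasion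
  condition amounts to. Otherwise u lives on the surviving
  species and is an eigenvector of the submatrix J\<bullet>.\<close>

definition index_mat :: "'a list \<Rightarrow> ('a \<Rightarrow> 'a \<Rightarrow> complex) \<Rightarrow> complex mat" where
  "index_mat ix f = mat (length ix) (length ix) (\<lambda>(r, c). f (ix ! r) (ix ! c))"

definition eigenfun_on :: "'a set \<Rightarrow> ('a \<Rightarrow> 'a \<Rightarrow> complex) \<Rightarrow> complex \<Rightarrow> ('a \<Rightarrow> complex) \<Rightarrow> bool" where
  "eigenfun_on I f e u \<longleftrightarrow> (\<exists>p\<in>I. u p \<noteq> 0) \<and> (\<forall>p\<in>I. (\<Sum>p'\<in>I. f p p' * u p') = e * u p)"

lemma sum_set_distinct_list:
  assumes "distinct ix"
  shows "(\<Sum>p\<in>set ix. g p) = (\<Sum>c<length ix. g (ix ! c))"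
proof -
  have "inj_on (nth ix) {..<length ix}" using assms by (intro inj_on_nth) auto
  moreover have "nth ix ` {..<length ix} = set ix" by (auto simp: set_conv_nth)
  ultimately show ?thesis by (metis sum.reindex comp_apply sum.cong)
qed

lemma index_mat_mult_vec:
  fixes u :: "'a \<Rightarrow> complex"
  assumes "distinct ix" "r < length ix"
  shows "(index_mat ix f *\<^sub>v vec (length ix) (\<lambda>c. u (ix ! c))) $ r
    = (\<Sum>p'\<in>set ix. f (ix ! r) p' * u p')"
  using assms by (simp add: index_mat_def scalar_prod_def sum_set_distinct_list atLeast0LessThan)

lemma eigenvalue_index_mat_iff:
  fixes ix :: "'a list"
  assumes dist: "distinct ix"
  shows "eigenvalue (index_mat ix f) e \<longleftrightarrow> (\<exists>u. eigenfun_on (set ix) f e u)"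
proof
  assume "eigenvalue (index_mat ix f) e"
  then obtain v where v: "v \<in> carrier_vec (length ix)" "v \<noteq> 0\<^sub>v (length ix)"
      "index_mat ix f *\<^sub>v v = e \<cdot>\<^sub>v v"
    unfolding eigenvalue_def eigenvector_def index_mat_def by auto
  define u :: "'a \<Rightarrow> complex" where "u p = v $ the_inv_into {..<length ix} (nth ix) p" for p
  have "inj_on (nth ix) {..<length ix}" using dist by (intro inj_on_nth) auto
  then have v_eq: "v = vec (length ix) (\<lambda>c. u (ix ! c))"
    using v(1) by (auto simp: u_def the_inv_into_f_f)
  have "eigenfun_on (set ix) f e u"
    unfolding eigenfun_on_def
  proof
    show "\<exists>p\<in>set ix. u p \<noteq> 0"
      using v(2) by (auto simp: v_eq vec_eq_iff)
    show "\<forall>p\<in>set ix. (\<Sum>p'\<in>set ix. f p p' * u p') = e * u p"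
    proof
      fix p assume "p \<in> set ix"
      then obtain r where r: "r < length ix" "p = ix ! r" by (auto simp: in_set_conv_nth)
      have "(\<Sum>p'\<in>set ix. f p p' * u p') = (e \<cdot>\<^sub>v v) $ r"
        using index_mat_mult_vec[OF dist r(1), of f u] v(3) r by (simp add: v_eq[symmetric])
      then show "(\<Sum>p'\<in>set ix. f p p' * u p') = e * u p"
        using r by (simp add: v_eq)
    qed
  qed
  then show "\<exists>u. eigenfun_on (set ix) f e u" by blast
next
  assume "\<exists>u. eigenfun_on (set ix) f e u"
  then obtain u where u: "eigenfun_on (set ix) f e u" ..
  define v where "v = vec (length ix) (\<lambda>c. u (ix ! c))"
  have "v \<noteq> 0\<^sub>v (length ix)"
    using u by (auto simp: eigenfun_on_def v_def vec_eq_iff in_set_conv_nth)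
  moreover have "index_mat ix f *\<^sub>v v = e \<cdot>\<^sub>v v"
    using u index_mat_mult_vec[OF dist]
    by (intro eq_vecI) (auto simp: eigenfun_on_def v_def index_mat_def)
  moreover have "v \<in> carrier_vec (length ix)" by (simp add: v_def)
  ultimately show "eigenvalue (index_mat ix f) e"
    unfolding eigenvalue_def eigenvector_def by (auto simp: index_mat_def)
qed

lemma eigenfun_on_subset:
  assumes u: "eigenfun_on I f e u" and "finite I" "J \<subseteq> I"
    and vanish: "\<And>p. p \<in> I - J \<Longrightarrow> u p = 0"
  shows "eigenfun_on J f e u"
proof -
  have "(\<Sum>p'\<in>J. f p p' * u p') = (\<Sum>p'\<in>I. f p p' * u p')" for p
    using assms by (intro sum.mono_neutral_left) auto
  moreover have "\<exists>p\<in>J. u p \<noteq> 0" using u vanish unfolding eigenfun_on_def by blast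
  ultimately show ?thesis using u \<open>J \<subseteq> I\<close> unfolding eigenfun_on_def by auto
qed

lemma norm_le_spectral_radius_index_mat:
  assumes "distinct ix" "eigenfun_on (set ix) f e u"
  shows "norm e \<le> spectral_radius (index_mat ix f)"
proof -
  have "eigenvalue (index_mat ix f) e" using assms eigenvalue_index_mat_iff by blast
  moreover have "ix \<noteq> []" using assms(2) by (auto simp: eigenfun_on_def)
  ultimately show ?thesis
    using spectral_radius_mem_max(2)[of "index_mat ix f" "length ix"]
    by (auto simp: index_mat_def spectrum_def)
qed

lemma spectral_radius_index_mat_lessI:
  assumes "distinct ix" "ix \<noteq> []"
    and "\<And>e u. eigenfun_on (set ix) f e u \<Longrightarrow> norm e < r"
  shows "spectral_radius (index_mat ix f) < r"
proof -
  have "index_mat ix f \<in> carrier_mat (length ix) (length ix)" by (simp add: index_mat_def)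
  from spectral_radius_mem_max(1)[OF this] obtain e
    where "eigenvalue (index_mat ix f) e" "spectral_radius (index_mat ix f) = norm e"
    using assms(2) by (auto simp: spectrum_def)
  then show ?thesis using assms eigenvalue_index_mat_iff by metis
qed

text \<open>The Jacobian block of one species whose adults are absent; for d = 0 the three
  terms add up to the single entry G + s 0.\<close>

definition leslie :: "nat \<Rightarrow> real \<Rightarrow> (nat \<Rightarrow> real) \<Rightarrow> nat \<Rightarrow> nat \<Rightarrow> real" where
  "leslie d G s a a' =
     (if a = 0 \<and> a' = d then G else 0) + (if 0 < a \<and> a' = a - 1 then s (a - 1) else 0)
     + (if a = d \<and> a' = d then s d else 0)"

lemma leslie_row_sum:
  fixes u :: "nat \<Rightarrow> complex"
  assumes "a \<le> d"
  shows "(\<Sum>a'\<le>d. of_real (leslie d G s a a') * u a')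
    = (if a = 0 then of_real G * u d else of_real (s (a - 1)) * u (a - 1))
      + (if a = d then of_real (s d) * u d else 0)"
proof -
  have delta: "(\<Sum>a'\<le>d. of_real (if P \<and> a' = k then c else 0) * u a')
      = (if P \<and> k \<le> d then of_real c * u k else 0)" for P k c
  proof -
    have "(\<Sum>a'\<le>d. of_real (if P \<and> a' = k then c else 0) * u a')
        = (\<Sum>a'\<le>d. if a' = k then (if P then of_real c * u k else 0) else 0)"
      by (rule sum.cong) auto
    then show ?thesis by simp
  qed
  show ?thesis
    using assms by (simp add: leslie_def distrib_right sum.distrib delta)
qed

lemma leslie_eigenvalue_norm_less_1:
  assumes eig: "eigenfun_on {..d} (\<lambda>a a'. of_real (leslie d G s a a')) ev u"
    and s: "\<And>a. a \<le> d \<Longrightarrow> 0 \<le> s a" and G: "0 \<le> G"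
    and subcritical: "G * (\<Prod>a<d. s a) + s d < 1"
  shows "norm ev < 1"
proof (rule ccontr)
  assume "\<not> norm ev < 1"
  then have ev_ge: "1 \<le> norm ev" by simp
  then have ev0: "ev \<noteq> 0" by auto
  have row: "ev * u a = (if a = 0 then of_real G * u d else of_real (s (a - 1)) * u (a - 1))
      + (if a = d then of_real (s d) * u d else 0)" if "a \<le> d" for a
    using eig that leslie_row_sum[OF that, of G s u] unfolding eigenfun_on_def by auto
  have juvenile: "u a = of_real (G * (\<Prod>j<a. s j)) * u d / ev ^ (a + 1)" if "a < d" for a
    using that
  proof (induction a)
    case 0
    then show ?case using row[of 0] ev0 by (simp add: field_simps)
  next
    case (Suc a)
    then have "ev * u (Suc a) = of_real (s a) * u a" using row[of "Suc a"] by simp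
    then show ?case using Suc ev0 by (simp add: field_simps)
  qed
  define C where "C = G * (\<Prod>j<d. s j)"
  have C_nonneg: "0 \<le> C" unfolding C_def using G s by (auto intro!: mult_nonneg_nonneg prod_nonneg)
  have "u d \<noteq> 0"
  proof
    assume "u d = 0"
    then have "u a = 0" if "a \<le> d" for a
      using juvenile that by (cases "a = d") auto
    then show False using eig unfolding eigenfun_on_def by auto
  qed
  have "ev * u d = of_real C * u d / ev ^ d + of_real (s d) * u d"
  proof (cases d)
    case 0
    then show ?thesis using row[of 0] by (simp add: C_def distrib_right)
  next
    case (Suc d')
    then show ?thesis using row[of d] juvenile[of d'] by (simp add: C_def field_simps)
  qed
  then have "(ev - of_real C / ev ^ d - of_real (s d)) * u d = 0"
    by (simp add: algebra_simps)
  then have "ev - of_real C / ev ^ d - of_real (s d) = 0"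
    using \<open>u d \<noteq> 0\<close> by (simp only: mult_eq_0_iff) blast
  then have char_eq: "ev ^ d * (ev - of_real (s d)) = of_real C"
    using ev0 by (simp add: field_simps)
  have "C < norm ev - s d" using ev_ge subcritical unfolding C_def by linarith
  also have "\<dots> \<le> norm (ev - of_real (s d))"
    using norm_triangle_ineq2[of ev "of_real (s d)"] s[of d] by simp
  also have "\<dots> \<le> norm (ev ^ d * (ev - of_real (s d)))"
    using ev_ge by (simp add: norm_mult norm_power mult_le_cancel_right1 one_le_power)
  finally show False using char_eq C_nonneg by simp
qed

lemma set_cdm_idx: "set (cdm_idx m \<delta> S) = {(a, i). i < m \<and> i \<in> S \<and> a \<le> \<delta> i}"
  unfolding cdm_idx_def by (auto simp: image_iff simp del: upt_Suc)

lemma distinct_cdm_idx: "distinct (cdm_idx m \<delta> S)"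
proof (induction m)
  case 0
  then show ?case by (simp add: cdm_idx_def)
next
  case (Suc m)
  have "cdm_idx (Suc m) \<delta> S
      = cdm_idx m \<delta> S @ (if m \<in> S then map (\<lambda>a. (a, m)) [0..<Suc (\<delta> m)] else [])"
    by (simp add: cdm_idx_def)
  then show ?case using Suc by (auto simp: set_cdm_idx distinct_map inj_on_def)
qed

lemma cdm_jac_mat_eq_index_mat:
  "cdm_jac_mat m \<delta> sig lam A q y S
    = index_mat (cdm_idx m \<delta> S) (\<lambda>p p'. of_real (cdm_jac m \<delta> sig lam A q y p p'))"
  by (simp add: cdm_jac_mat_def index_mat_def Let_def)

lemma deriv0_eqI: "DERIV f 0 :> D \<Longrightarrow> deriv0 f = D"
  unfolding deriv0_def by (rule some_equality) (auto intro: DERIV_unique)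

lemma DERIV_coordinate_update:
  "DERIV (\<lambda>t. (y(c := y c + t)) p) 0 :> (if p = c then 1 else 0)"
  by (cases "p = c") (auto intro!: derivative_eq_intros)

lemma cdm_G_coordinate_update_differentiable:
  assumes "0 < q i" "0 \<le> (\<Sum>k<m. A i k * y (\<delta> k, k))"
  shows "\<exists>D. DERIV (\<lambda>t. cdm_G m lam A q i (cdm_adults \<delta> (y(c := y c + t)))) 0 :> D"
proof -
  define S where "S t = (\<Sum>k<m. A i k * (y(c := y c + t)) (\<delta> k, k))" for t
  have dS: "DERIV S 0 :> (\<Sum>k<m. A i k * (if (\<delta> k, k) = c then 1 else 0))"
    unfolding S_def by (intro DERIV_sum DERIV_cmult DERIV_coordinate_update)
  have "0 \<le> S 0 / q i"
    using assms unfolding S_def by simp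
  then have "1 + S 0 / q i \<noteq> 0" by linarith
  with DERIV_divide[OF DERIV_const DERIV_add[OF DERIV_const DERIV_cdivide[OF dS]]]
  show ?thesis unfolding cdm_G_def cdm_adults_def S_def[symmetric] by blast
qed

lemma cdm_jac_extinct:
  assumes "i < m" and extinct: "y (\<delta> i, i) = 0" and "0 < q i"
    and "0 \<le> (\<Sum>k<m. A i k * y (\<delta> k, k))" and a: "a \<le> \<delta> i"
  shows "cdm_jac m \<delta> sig lam A q y (a, i) (a', i')
    = (if i' = i then leslie (\<delta> i) (cdm_G m lam A q i (cdm_adults \<delta> y)) (\<lambda>a. sig a i) a a' else 0)"
proof -
  define c where "c = (a', i')"
  define Y where "Y t = y(c := y c + t)" for t
  define g where "g t = cdm_G m lam A q i (cdm_adults \<delta> (Y t))" for t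
  obtain Dg where Dg: "DERIV g 0 :> Dg"
    using cdm_G_coordinate_update_differentiable
        [where y = y and \<delta> = \<delta> and A = A and q = q and c = c, OF assms(3,4)]
    unfolding g_def Y_def by blast
  have dY: "DERIV (\<lambda>t. Y t p) 0 :> (if p = c then 1 else 0)" for p
    unfolding Y_def by (rule DERIV_coordinate_update)
  have Y0: "Y 0 = y" unfolding Y_def by simp
  have h: "cdm_h m \<delta> sig lam A q (Y t) (a, i) =
      (if \<delta> i = 0 then sig 0 i * Y t (0, i) + g t * Y t (\<delta> i, i)
       else if a = 0 then g t * Y t (\<delta> i, i)
       else if a < \<delta> i then sig (a - 1) i * Y t (a - 1, i)
       else sig (a - 1) i * Y t (a - 1, i) + sig (\<delta> i) i * Y t (\<delta> i, i))" for t
    using a by (simp add: cdm_h_def g_def Let_def)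
  \<comment> \<open>the term with the derivative of G is multiplied by the extinct adult density\<close>
  have "DERIV (\<lambda>t. cdm_h m \<delta> sig lam A q (Y t) (a, i)) 0
      :> (if i' = i then leslie (\<delta> i) (g 0) (\<lambda>a. sig a i) a a' else 0)"
    unfolding h using a extinct
    by (cases "\<delta> i = 0"; cases "a = 0"; cases "a < \<delta> i")
      (auto intro!: derivative_eq_intros Dg dY simp: Y0 c_def leslie_def)
  then show ?thesis
    unfolding cdm_jac_def using Y0 by (auto simp: Y_def c_def g_def dest: deriv0_eqI)
qed

lemma invasion_failure_imp_subcritical:
  fixes l P s x :: real
  assumes "s < 1" "0 \<le> x" "(l * P - (1 - s)) / (1 - s) < x"
  shows "l / (1 + x) * P + s < 1"
proof -
  have "l * P < (1 - s) * (1 + x)"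
    using assms by (simp add: pos_divide_less_eq algebra_simps)
  then show ?thesis
    using assms by (simp add: field_simps)
qed

lemma cdm_extinct_eigenvalue_norm_less_1:
  fixes u :: "nat \<times> nat \<Rightarrow> complex"
  assumes eig: "eigenfun_on (set (cdm_idx m \<delta> {..<m}))
      (\<lambda>p p'. of_real (cdm_jac m \<delta> sig lam A q y p p')) ev u"
    and i: "i < m" and extinct: "y (\<delta> i, i) = 0" and q: "0 < q i"
    and S: "0 \<le> (\<Sum>k<m. A i k * y (\<delta> k, k))"
    and nz: "\<exists>a\<le>\<delta> i. u (a, i) \<noteq> 0"
    and sig: "\<And>a. a \<le> \<delta> i \<Longrightarrow> 0 \<le> sig a i" "sig (\<delta> i) i < 1" and "0 \<le> lam i"
    and invasion_fails:
      "(lam i * (\<Prod>a<\<delta> i. sig a i) - (1 - sig (\<delta> i) i)) / (1 - sig (\<delta> i) i)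
        < (\<Sum>k<m. A i k * y (\<delta> k, k)) / q i"
  shows "norm ev < 1"
proof (rule leslie_eigenvalue_norm_less_1)
  let ?G = "cdm_G m lam A q i (cdm_adults \<delta> y)"
  show "?G * (\<Prod>a<\<delta> i. sig a i) + sig (\<delta> i) i < 1"
    using invasion_failure_imp_subcritical[OF sig(2) divide_nonneg_pos[OF S q] invasion_fails]
    by (simp add: cdm_G_def cdm_adults_def)
  let ?I = "set (cdm_idx m \<delta> {..<m})"
  note jac = cdm_jac_extinct[where y = y and \<delta> = \<delta> and q = q and A = A, OF i extinct q S]
  have block: "(\<Sum>p'\<in>?I. of_real (cdm_jac m \<delta> sig lam A q y (a, i) p') * u p')
      = (\<Sum>a'\<le>\<delta> i. of_real (leslie (\<delta> i) ?G (\<lambda>a. sig a i) a a') * u (a', i))"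
    if a: "a \<le> \<delta> i" for a
  proof -
    have "(\<Sum>p'\<in>?I. of_real (cdm_jac m \<delta> sig lam A q y (a, i) p') * u p')
        = (\<Sum>p'\<in>(\<lambda>a'. (a', i)) ` {..\<delta> i}. of_real (cdm_jac m \<delta> sig lam A q y (a, i) p') * u p')"
      using i a by (intro sum.mono_neutral_right finite_set)
        (auto simp: set_cdm_idx jac[OF a])
    also have "\<dots> = (\<Sum>a'\<le>\<delta> i. of_real (leslie (\<delta> i) ?G (\<lambda>a. sig a i) a a') * u (a', i))"
      by (subst sum.reindex) (auto simp: inj_on_def jac[OF a])
    finally show ?thesis .
  qed
  show "eigenfun_on {..\<delta> i} (\<lambda>a a'. of_real (leslie (\<delta> i) ?G (\<lambda>a. sig a i) a a')) ev (\<lambda>a. u (a, i))"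
    using eig nz i block unfolding eigenfun_on_def by (auto simp: set_cdm_idx)
  show "0 \<le> ?G" using \<open>0 \<le> lam i\<close> q S unfolding cdm_G_def cdm_adults_def by simp
qed (use sig in auto)

theorem corollary1:
  fixes m :: nat and \<delta> :: "nat \<Rightarrow> nat" and sig :: "nat \<Rightarrow> nat \<Rightarrow> real"
    and lam :: "nat \<Rightarrow> real" and A :: "nat \<Rightarrow> nat \<Rightarrow> real" and q :: "nat \<Rightarrow> real"
    and Z :: "nat set" and y :: "nat \<times> nat \<Rightarrow> real"
  assumes m: "m \<ge> 1"
    and sig_juv: "\<And>i a. i < m \<Longrightarrow> a < \<delta> i \<Longrightarrow> 0 < sig a i \<and> sig a i \<le> 1"
    and sig_ad: "\<And>i. i < m \<Longrightarrow> 0 < sig (\<delta> i) i \<and> sig (\<delta> i) i < 1"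
    and lam: "\<And>i. i < m \<Longrightarrow> lam i > 0"
    and A_nonneg: "\<And>i k. i < m \<Longrightarrow> k < m \<Longrightarrow> A i k \<ge> 0"
    and A_diag: "\<And>i. i < m \<Longrightarrow> A i i > 0"
    and q: "\<And>i. i < m \<Longrightarrow> q i > 0"
    and equil: "\<And>a i. i < m \<Longrightarrow> a \<le> \<delta> i \<Longrightarrow> cdm_h m \<delta> sig lam A q y (a, i) = y (a, i)"
    and Z: "Z \<subseteq> {..<m}" "Z \<noteq> {}"
    and zero: "\<And>i. i \<in> Z \<Longrightarrow> y (\<delta> i, i) = 0"
    and pos: "\<And>i. i < m \<Longrightarrow> i \<notin> Z \<Longrightarrow> y (\<delta> i, i) > 0"
    and sub: "{..<m} - Z \<noteq> {} \<Longrightarrow>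
              spectral_radius (cdm_jac_mat m \<delta> sig lam A q y ({..<m} - Z)) < 1"
    and cond: "\<And>i. i \<in> Z \<Longrightarrow>
              (lam i * (\<Prod>a<\<delta> i. sig a i) - (1 - sig (\<delta> i) i)) / (1 - sig (\<delta> i) i)
                < (\<Sum>k\<in>{..<m} - Z. A i k * y (\<delta> k, k)) / q i"
  shows "spectral_radius (cdm_jac_mat m \<delta> sig lam A q y {..<m}) < 1"
  unfolding cdm_jac_mat_eq_index_mat
proof (rule spectral_radius_index_mat_lessI[OF distinct_cdm_idx])
  let ?J = "\<lambda>p p'. complex_of_real (cdm_jac m \<delta> sig lam A q y p p')"
  show "cdm_idx m \<delta> {..<m} \<noteq> []"
    using m set_cdm_idx[of m \<delta> "{..<m}"] by force
  fix ev u assume u: "eigenfun_on (set (cdm_idx m \<delta> {..<m})) ?J ev u"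
  show "norm ev < 1"
  proof (cases "\<exists>i\<in>Z. \<exists>a\<le>\<delta> i. u (a, i) \<noteq> 0")
    case True
    then obtain i where "i \<in> Z" and nz: "\<exists>a\<le>\<delta> i. u (a, i) \<noteq> 0" by blast
    then have i: "i < m" using Z by auto
    have "(\<Sum>k<m. A i k * y (\<delta> k, k)) = (\<Sum>k\<in>{..<m} - Z. A i k * y (\<delta> k, k))"
      using zero by (intro sum.mono_neutral_right) auto
    moreover have "0 \<le> (\<Sum>k\<in>{..<m} - Z. A i k * y (\<delta> k, k))"
      using A_nonneg i pos by (intro sum_nonneg mult_nonneg_nonneg) (auto intro: less_imp_le)
    ultimately show ?thesis
      using cond[OF \<open>i \<in> Z\<close>] sig_juv[OF i] sig_ad[OF i] lam[OF i]
      by (intro cdm_extinct_eigenvalue_norm_less_1[OF u i zero[OF \<open>i \<in> Z\<close>] q[OF i] _ nz])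
        (auto simp: le_less)
  next
    case False
    with Z have "eigenfun_on (set (cdm_idx m \<delta> ({..<m} - Z))) ?J ev u"
      by (intro eigenfun_on_subset[OF u] finite_set) (auto simp: set_cdm_idx)
    then have "{..<m} - Z \<noteq> {}"
      by (auto simp: eigenfun_on_def set_cdm_idx)
    moreover have "norm ev \<le> spectral_radius (cdm_jac_mat m \<delta> sig lam A q y ({..<m} - Z))"
      unfolding cdm_jac_mat_eq_index_mat
      by (rule norm_le_spectral_radius_index_mat[OF distinct_cdm_idx]) fact
    ultimately show ?thesis using sub by fastforce
  qed
qed

end
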